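(* Let $C_0>c_0>0$ and $L>R>0$, and let $Q_L=\{(x,t):0<t<L^2,|x|<L\}$. Suppose $w$ satisfies in the viscosity sense $$\partial_tw-\mathcal P^+(D^2w)\le0\ \text{in }Q_L,\qquad w(x,0)\le c_0\ \text{on }\{t=0\},\qquad w\le C_0\ \text{in }\overline{Q_L}.$$ Then there is a constant $C$ depending only on $C_0,d,\Lambda$ such that $w(x,t)\le c_0+C\frac{R^2}{L^2}$ for $(x,t)\in\overline{Q_R}$.
   Context: $\mathcal P^+(M)=\Lambda\,\mathrm{Tr}M_+-\lambda\,\mathrm{Tr}M_-$ ($0<\lambda<\Lambda$) is Pucci's maximal operator on real symmetric $d\times d$ matrices, $M_\pm\ge0$ the positive and negative parts of $M$. *)

theory Defs
  imports "HOL-Analysis.Analysis"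
begin

definition symmetric_mat :: "real^'n^'n \<Rightarrow> bool" where
  "symmetric_mat M \<longleftrightarrow> transpose M = M"

definition psd_mat :: "real^'n^'n \<Rightarrow> bool" where
  "psd_mat M \<longleftrightarrow> symmetric_mat M \<and> (\<forall>v. v \<bullet> (M *v v) \<ge> 0)"

text \<open>Positive and negative parts: the unique decomposition M = M_+ - M_-
  with M_+, M_- positive semidefinite and M_+ M_- = 0.\<close>
definition pos_part_mat :: "real^'n^'n \<Rightarrow> real^'n^'n" where
  "pos_part_mat M = (THE P. psd_mat P \<and> psd_mat (P - M) \<and> P ** (P - M) = 0)"

definition neg_part_mat :: "real^'n^'n \<Rightarrow> real^'n^'n" where
  "neg_part_mat M = pos_part_mat M - M"

definition pucci_max :: "real \<Rightarrow> real \<Rightarrow> real^'n^'n \<Rightarrow> real" where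
  "pucci_max lam Lam M = Lam * trace (pos_part_mat M) - lam * trace (neg_part_mat M)"

definition cyl :: "real \<Rightarrow> ((real^'n) \<times> real) set" where
  "cyl L = {(x, t). 0 < t \<and> t < L\<^sup>2 \<and> norm x < L}"

definition usc_on :: "('a::metric_space) set \<Rightarrow> ('a \<Rightarrow> real) \<Rightarrow> bool" where
  "usc_on S f \<longleftrightarrow> (\<forall>p\<in>S. \<forall>e>0. \<exists>d>0. \<forall>q\<in>S. dist q p < d \<longrightarrow> f q < f p + e)"

definition visc_subsol ::
  "real \<Rightarrow> real \<Rightarrow> ((real^'n) \<times> real) set \<Rightarrow> (real^'n \<Rightarrow> real \<Rightarrow> real) \<Rightarrow> bool" where
  "visc_subsol lam Lam \<Omega> w \<longleftrightarrow>
     (\<forall>x0 t0 U (\<phi>::real^'n \<Rightarrow> real \<Rightarrow> real) \<phi>t D\<phi> D2\<phi>.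
        (x0, t0) \<in> \<Omega> \<and> open U \<and> (x0, t0) \<in> U \<and>
        (\<forall>(x, t)\<in>U. ((\<lambda>s. \<phi> x s) has_real_derivative \<phi>t x t) (at t)) \<and>
        (\<forall>(x, t)\<in>U. ((\<lambda>y. \<phi> y t) has_derivative (\<lambda>h. D\<phi> x t \<bullet> h)) (at x)) \<and>
        (\<forall>(x, t)\<in>U. ((\<lambda>y. D\<phi> y t) has_derivative (\<lambda>h. D2\<phi> x t *v h)) (at x)) \<and>
        (\<forall>(x, t)\<in>U. symmetric_mat (D2\<phi> x t)) \<and>
        continuous_on U (\<lambda>(x, t). \<phi> x t) \<and>
        continuous_on U (\<lambda>(x, t). \<phi>t x t) \<and>
        continuous_on U (\<lambda>(x, t). D\<phi> x t) \<and>
        continuous_on U (\<lambda>(x, t). D2\<phi> x t) \<and>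
        (\<forall>(x, t)\<in>U \<inter> \<Omega>. w x t - \<phi> x t \<le> w x0 t0 - \<phi> x0 t0)
        \<longrightarrow> \<phi>t x0 t0 - pucci_max lam Lam (D2\<phi> x0 t0) \<le> 0)"

end

theory Submission imports Defs begin

text \<open>Comparison with the quadratic barrier
  \<open>\<psi>(x,t) = c\<^sub>0 + (C\<^sub>0/L\<^sup>2) |x|\<^sup>2 + (K/L\<^sup>2) t\<close>, \<open>K = 2\<Lambda>C\<^sub>0 d + C\<^sub>0 + 1\<close>.
  On the parabolic boundary of \<open>Q\<^sub>L\<close> (and on its top \<open>t = L\<^sup>2\<close>) we have \<open>w \<le> \<psi>\<close> from the
  hypotheses. A positive maximum of the upper semicontinuous function \<open>w - \<psi>\<close> over the compact
  closure would therefore be attained inside \<open>Q\<^sub>L\<close>, where \<open>\<psi>\<close> is an admissible test function;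
  but \<open>\<psi>\<^sub>t - \<P>\<^sup>+(D\<^sup>2\<psi>) = (K - 2\<Lambda>C\<^sub>0 d)/L\<^sup>2 > 0\<close>. Evaluating \<open>\<psi>\<close> on \<open>Q\<^sub>R\<close> gives the bound.\<close>

lemma matrix_vector_mult_mat: "(mat c :: real^'n^'n) *v x = c *\<^sub>R x"
  by (simp add: vec_eq_iff matrix_vector_mult_def mat_def if_distrib if_distribR sum.delta cong: if_cong)

lemma trace_mat: "trace (mat c :: real^'n^'n) = c * real CARD('n)"
  by (simp add: trace_def mat_def)

lemma symmetric_mat_inner_commute:
  fixes N :: "real^'n^'n"
  assumes "symmetric_mat N"
  shows "v \<bullet> (N *v u) = (N *v v) \<bullet> u"
proof -
  have "v \<bullet> (N *v u) = (transpose N *v v) \<bullet> u"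
    by (simp only: dot_lmul_matrix[symmetric] transpose_matrix_vector)
  then show ?thesis using assms by (simp only: symmetric_mat_def)
qed

lemma pos_part_mat_mat:
  assumes c: "0 \<le> c"
  shows "pos_part_mat (mat c :: real^'n^'n) = mat c"
  unfolding pos_part_mat_def
proof (rule the_equality)
  have "transpose (0::real^'n^'n) = 0" by (simp add: transpose_def vec_eq_iff)
  then show "psd_mat (mat c :: real^'n^'n) \<and> psd_mat (mat c - mat c :: real^'n^'n) \<and>
      mat c ** (mat c - mat c :: real^'n^'n) = 0"
    using c by (simp add: psd_mat_def symmetric_mat_def matrix_vector_mult_mat)
next
  fix P :: "real^'n^'n"
  assume P: "psd_mat P \<and> psd_mat (P - mat c) \<and> P ** (P - mat c) = 0"
  define N where "N = P - mat c"
  have PN: "P = N + mat c" by (simp add: N_def)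
  have sym: "symmetric_mat N" and psd: "\<And>v. v \<bullet> (N *v v) \<ge> 0"
    using P by (auto simp: N_def psd_mat_def)
  have "N *v v = 0" for v :: "real^'n"
  proof -
    have "0 = v \<bullet> ((P ** N) *v v)" using P by (simp add: N_def)
    also have "\<dots> = v \<bullet> (N *v (N *v v)) + c * (v \<bullet> (N *v v))"
      by (simp add: PN matrix_vector_mul_assoc[symmetric] matrix_vector_mult_add_rdistrib
          matrix_vector_mult_mat inner_add_right)
    also have "v \<bullet> (N *v (N *v v)) = (N *v v) \<bullet> (N *v v)"
      using symmetric_mat_inner_commute[OF sym] by simp
    finally have "(N *v v) \<bullet> (N *v v) = - c * (v \<bullet> (N *v v))" by simp
    also have "\<dots> \<le> 0" using c psd[of v] by simp
    finally show ?thesis by (metis inner_eq_zero_iff inner_ge_zero order_antisym)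
  qed
  then have "N = 0" by (metis matrix_eq matrix_vector_mult_0)
  then show "P = mat c" by (simp add: PN)
qed

lemma pucci_max_mat:
  assumes "0 \<le> c"
  shows "pucci_max lam Lam (mat c :: real^'n^'n) = Lam * c * real CARD('n)"
proof -
  have "trace (0::real^'n^'n) = 0" by (simp add: trace_def)
  then show ?thesis using assms by (simp add: pucci_max_def neg_part_mat_def pos_part_mat_mat trace_mat)
qed

lemma usc_on_add_continuous:
  assumes f: "usc_on S f" and g: "continuous_on S g"
  shows "usc_on S (\<lambda>p. f p + g p)"
  unfolding usc_on_def
proof (intro ballI allI impI)
  fix p and e :: real
  assume p: "p \<in> S" and e: "0 < e"
  obtain d1 where d1: "d1 > 0" "\<forall>q\<in>S. dist q p < d1 \<longrightarrow> f q < f p + e/2"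
    using f p e unfolding usc_on_def by (meson half_gt_zero)
  obtain d2 where d2: "d2 > 0" "\<forall>q\<in>S. dist q p < d2 \<longrightarrow> dist (g q) (g p) < e/2"
    using g p e unfolding continuous_on_iff by (meson half_gt_zero)
  have "f q + g q < f p + g p + e" if "q \<in> S" "dist q p < min d1 d2" for q
  proof -
    have "f q < f p + e/2" "\<bar>g q - g p\<bar> < e/2"
      using d1(2) d2(2) that by (auto simp: dist_real_def)
    then show ?thesis by linarith
  qed
  then show "\<exists>d>0. \<forall>q\<in>S. dist q p < d \<longrightarrow> f q + g q < f p + g p + e"
    using d1(1) d2(1) by (intro exI[of _ "min d1 d2"]) auto
qed

lemma usc_on_compact_attains_max:
  fixes f :: "'a::metric_space \<Rightarrow> real"
  assumes K: "compact K" "K \<noteq> {}" and f: "usc_on K f"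
  shows "\<exists>p\<in>K. \<forall>q\<in>K. f q \<le> f p"
proof (rule ccontr)
  assume "\<not> ?thesis"
  then obtain g where g: "\<And>p. p \<in> K \<Longrightarrow> g p \<in> K \<and> f p < f (g p)"
    by (metis not_le)
  have "\<exists>d>0. \<forall>q\<in>K. dist q p < d \<longrightarrow> f q < f (g p)" if "p \<in> K" for p
  proof -
    have "f (g p) - f p > 0" using g[OF that] by simp
    with f that obtain d where "d > 0" "\<forall>q\<in>K. dist q p < d \<longrightarrow> f q < f p + (f (g p) - f p)"
      unfolding usc_on_def by blast
    then show ?thesis by auto
  qed
  then obtain d where d: "\<And>p. p \<in> K \<Longrightarrow> d p > 0 \<and> (\<forall>q\<in>K. dist q p < d p \<longrightarrow> f q < f (g p))"
    by metis
  have "K \<subseteq> (\<Union>p\<in>K. ball p (d p))" using d by force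
  then obtain D where D: "D \<subseteq> K" "finite D" "K \<subseteq> (\<Union>p\<in>D. ball p (d p))"
    using compactE_image[OF K(1), of K "\<lambda>p. ball p (d p)"] by auto
  with K(2) have "D \<noteq> {}" by auto
  obtain j where j: "j \<in> D" "Max ((\<lambda>i. f (g i)) ` D) = f (g j)"
    using obtains_MAX[OF D(2) \<open>D \<noteq> {}\<close>] by metis
  have j_max: "f (g i) \<le> f (g j)" if "i \<in> D" for i
    using j(2) Max_ge[of "(\<lambda>i. f (g i)) ` D"] D(2) that by auto
  \<comment> \<open>\<open>g j\<close> lies in a ball around some \<open>i \<in> D\<close>, so \<open>f (g j) < f (g i) \<le> f (g j)\<close>.\<close>
  obtain i where "i \<in> D" "g j \<in> ball i (d i)" using D j(1) g by blast
  moreover have "i \<in> K" "g j \<in> K" using \<open>i \<in> D\<close> j(1) D(1) g by auto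
  ultimately have "f (g j) < f (g i)" using d[of i] by (simp add: dist_commute)
  with j_max[OF \<open>i \<in> D\<close>] show False by simp
qed

lemma closure_cyl_subset: "closure (cyl L :: ((real^'n) \<times> real) set) \<subseteq> cball 0 L \<times> {0..L\<^sup>2}"
  by (rule closure_minimal) (auto simp: cyl_def intro: closed_Times)

lemma compact_closure_cyl: "compact (closure (cyl L :: ((real^'n) \<times> real) set))"
  using closure_cyl_subset[of L]
  by (meson bounded_Times bounded_cball bounded_closed_interval bounded_subset closed_closure
      compact_eq_bounded_closed)

lemma cyl_mono: "R \<le> L \<Longrightarrow> cyl R \<subseteq> cyl L"
  unfolding cyl_def by clarsimp (smt (verit) norm_ge_zero power_mono)

lemma visc_subsol_paraboloid_test:
  fixes w :: "real^'n \<Rightarrow> real \<Rightarrow> real"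
  assumes w: "visc_subsol lam Lam \<Omega> w" and x0t0: "(x0, t0) \<in> \<Omega>" and b: "0 \<le> b"
    and max: "\<And>x t. (x, t) \<in> \<Omega> \<Longrightarrow> w x t - (b * (x \<bullet> x) + k * t) \<le> w x0 t0 - (b * (x0 \<bullet> x0) + k * t0)"
  shows "k \<le> 2 * b * Lam * real CARD('n)"
proof -
  define \<phi> where "\<phi> = (\<lambda>(x::real^'n) (t::real). b * (x \<bullet> x) + k * t)"
  have \<phi>t: "((\<lambda>s. \<phi> x s) has_real_derivative k) (at t)" for x t
    unfolding \<phi>_def by (auto intro!: derivative_eq_intros)
  have D\<phi>: "((\<lambda>y. \<phi> y t) has_derivative (\<lambda>h. ((2 * b) *\<^sub>R x) \<bullet> h)) (at x)" for x t
    unfolding \<phi>_def by (auto intro!: derivative_eq_intros simp: inner_commute algebra_simps)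
  have D2\<phi>: "((\<lambda>y. (2 * b) *\<^sub>R y) has_derivative (\<lambda>h. mat (2 * b) *v h)) (at x)" for x :: "real^'n"
    by (auto intro!: derivative_eq_intros simp: matrix_vector_mult_mat)
  have \<phi>_max: "\<forall>(x, t)\<in>UNIV \<inter> \<Omega>. w x t - \<phi> x t \<le> w x0 t0 - \<phi> x0 t0"
    using max by (auto simp: \<phi>_def)
  have "k - pucci_max lam Lam (mat (2 * b) :: real^'n^'n) \<le> 0"
  proof (rule w[unfolded visc_subsol_def, rule_format, of x0 t0 UNIV \<phi> "\<lambda>_ _. k"
        "\<lambda>x _. (2 * b) *\<^sub>R x" "\<lambda>_ _. mat (2 * b)"], intro conjI)
    show "continuous_on UNIV (\<lambda>(x, t). \<phi> x t)" "continuous_on UNIV (\<lambda>(x::real^'n, t::real). (2 * b) *\<^sub>R x)"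
      unfolding \<phi>_def by (auto intro!: continuous_intros simp: case_prod_unfold)
  qed (use x0t0 \<phi>_max in \<open>auto simp: symmetric_mat_def intro: \<phi>t D\<phi> D2\<phi>\<close>)
  then show ?thesis using b by (simp add: pucci_max_mat mult_ac)
qed

lemma visc_subsol_le_paraboloid:
  fixes w :: "real^'n \<Rightarrow> real \<Rightarrow> real"
  assumes L: "0 < L" and b: "0 \<le> b" and k: "0 \<le> k" "2 * b * Lam * real CARD('n) < k"
    and side: "M \<le> c0 + b * L\<^sup>2" and top: "M \<le> c0 + k * L\<^sup>2"
    and usc: "usc_on (closure (cyl L)) (\<lambda>(x, t). w x t)"
    and w: "visc_subsol lam Lam (cyl L) w"
    and init: "\<forall>x. (x, 0) \<in> closure (cyl L) \<longrightarrow> w x 0 \<le> c0"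
    and bound: "\<forall>(x, t)\<in>closure (cyl L). w x t \<le> M"
    and xt: "(x, t) \<in> closure (cyl L)"
  shows "w x t \<le> c0 + b * (x \<bullet> x) + k * t"
proof -
  define f where "f = (\<lambda>(x, t). w x t - (c0 + b * (x \<bullet> x) + k * t))"
  have in_box: "norm x \<le> L \<and> 0 \<le> t \<and> t \<le> L\<^sup>2" if "(x, t) \<in> closure (cyl L)" for x t
    using closure_cyl_subset[of L] that by auto
  have "(0, L\<^sup>2 / 2) \<in> cyl L" using L by (auto simp: cyl_def)
  then have ne: "closure (cyl L) \<noteq> {}" using closure_subset by blast
  have "f = (\<lambda>p. (\<lambda>(x, t). w x t) p + (\<lambda>(x, t). - (c0 + b * (x \<bullet> x) + k * t)) p)"
    by (auto simp: f_def fun_eq_iff)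
  then have "usc_on (closure (cyl L)) f"
    by (simp only:) (rule usc_on_add_continuous[OF usc],
        auto intro!: continuous_intros simp: case_prod_unfold)
  then obtain x0 t0 where max0: "(x0, t0) \<in> closure (cyl L)"
      and max: "\<And>q. q \<in> closure (cyl L) \<Longrightarrow> f q \<le> f (x0, t0)"
    using usc_on_compact_attains_max[OF compact_closure_cyl ne] by (metis old.prod.exhaust)
  have "f (x0, t0) \<le> 0"
  proof (rule ccontr)
    assume "\<not> f (x0, t0) \<le> 0"
    then have pos: "w x0 t0 > c0 + b * (x0 \<bullet> x0) + k * t0" by (simp add: f_def)
    have box: "norm x0 \<le> L" "0 \<le> t0" "t0 \<le> L\<^sup>2" using in_box[OF max0] by auto
    have wM: "w x0 t0 \<le> M" using bound max0 by auto
    have bx: "0 \<le> b * (x0 \<bullet> x0)" and kt: "0 \<le> k * t0" using b k box by auto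
    have "t0 \<noteq> 0"
    proof
      assume "t0 = 0"
      with init max0 have "w x0 t0 \<le> c0" by auto
      moreover have "k * t0 = 0" using \<open>t0 = 0\<close> by simp
      ultimately show False using pos bx by linarith
    qed
    moreover have "norm x0 \<noteq> L"
    proof
      assume "norm x0 = L"
      then have "b * (x0 \<bullet> x0) = b * L\<^sup>2" by (simp add: power2_norm_eq_inner[symmetric])
      then show False using pos wM side kt by linarith
    qed
    moreover have "t0 \<noteq> L\<^sup>2"
    proof
      assume "t0 = L\<^sup>2"
      then have "k * t0 = k * L\<^sup>2" by simp
      then show False using pos wM top bx by linarith
    qed
    ultimately have "(x0, t0) \<in> cyl L" using box by (auto simp: cyl_def)
    moreover have "w x t - (b * (x \<bullet> x) + k * t) \<le> w x0 t0 - (b * (x0 \<bullet> x0) + k * t0)"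
      if "(x, t) \<in> cyl L" for x t
      using max[of "(x, t)"] closure_subset that by (force simp: f_def)
    ultimately have "k \<le> 2 * b * Lam * real CARD('n)"
      by (rule visc_subsol_paraboloid_test[OF w _ b])
    with k(2) show False by simp
  qed
  with max[OF xt] show ?thesis by (simp add: f_def)
qed

theorem lemma6p1:
  fixes C0 Lam :: real
  assumes "0 < C0" and "0 < Lam"
  shows "\<exists>C::real. \<forall>(lam::real) (c0::real) (L::real) (R::real) (w::real^'n \<Rightarrow> real \<Rightarrow> real).
           0 < lam \<and> lam < Lam \<and> 0 < c0 \<and> c0 < C0 \<and> 0 < R \<and> R < L \<and>
           usc_on (closure (cyl L)) (\<lambda>(x, t). w x t) \<and>
           visc_subsol lam Lam (cyl L) w \<and>
           (\<forall>x. (x, 0) \<in> closure (cyl L) \<longrightarrow> w x 0 \<le> c0) \<and>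
           (\<forall>(x, t)\<in>closure (cyl L). w x t \<le> C0)
           \<longrightarrow> (\<forall>(x, t)\<in>closure (cyl R). w x t \<le> c0 + C * R\<^sup>2 / L\<^sup>2)"
proof -
  define K where "K = 2 * Lam * C0 * real CARD('n) + C0 + 1"
  have K: "2 * Lam * C0 * real CARD('n) < K" "C0 \<le> K" using assms by (auto simp: K_def)
  show ?thesis
  proof (intro exI[of _ "C0 + K"] allI impI ballI, elim conjE, clarify)
    fix lam c0 L R :: real and w :: "real^'n \<Rightarrow> real \<Rightarrow> real"
      and x :: "real^'n" and t :: real
    assume c0: "0 < c0" and R: "0 < R" "R < L"
      and usc: "usc_on (closure (cyl L)) (\<lambda>(x, t). w x t)" and w: "visc_subsol lam Lam (cyl L) w"
      and init: "\<forall>x. (x, 0) \<in> closure (cyl L) \<longrightarrow> w x 0 \<le> c0"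
      and bound: "\<forall>(x, t)\<in>closure (cyl L). w x t \<le> C0" and xt: "(x, t) \<in> closure (cyl R)"
    have L: "0 < L" "0 < L\<^sup>2" using R by auto
    have xtL: "(x, t) \<in> closure (cyl L)"
      using xt closure_mono[OF cyl_mono] R by (meson less_imp_le subsetD)
    have "2 * (C0 / L\<^sup>2) * Lam * real CARD('n) = (2 * Lam * C0 * real CARD('n)) / L\<^sup>2" by simp
    also have "\<dots> < K / L\<^sup>2" using K(1) L(2) by (rule divide_strict_right_mono)
    finally have strict: "2 * (C0 / L\<^sup>2) * Lam * real CARD('n) < K / L\<^sup>2" .
    have "w x t \<le> c0 + C0 / L\<^sup>2 * (x \<bullet> x) + K / L\<^sup>2 * t"
      using L K assms c0
      by (intro visc_subsol_le_paraboloid[OF L(1) _ _ strict _ _ usc w init bound xtL]) auto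
    also have "\<dots> \<le> c0 + C0 / L\<^sup>2 * R\<^sup>2 + K / L\<^sup>2 * R\<^sup>2"
    proof -
      have "norm x \<le> R" "0 \<le> t" "t \<le> R\<^sup>2" using closure_cyl_subset[of R] xt by auto
      then have "x \<bullet> x \<le> R\<^sup>2" by (simp add: power2_norm_eq_inner[symmetric] power_mono)
      with \<open>t \<le> R\<^sup>2\<close> show ?thesis using assms K(2) L
        by (intro add_mono mult_left_mono) auto
    qed
    finally show "w x t \<le> c0 + (C0 + K) * R\<^sup>2 / L\<^sup>2" by (simp add: add_divide_distrib distrib_right)
  qed
qed

end
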